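(* The following identities of formal power series hold: $$(1,1,52,q)=(1,1,6,q^9)+P_{3,1}(1,1,6,q),\qquad (8,7,8,q)=(1,1,6,q^9)+P_{3,2}(1,1,6,q),$$ $$(4,1,13,q)=(2,1,3,q^9)+P_{3,1}(2,1,3,q),\qquad (2,1,26,q)=(2,1,3,q^9)+P_{3,2}(2,1,3,q).$$
   Context: For integers $A,B,C$ with $A>0$ and $B^2-4AC<0$, $(A,B,C,q):=\sum_{(x,y)\in\mathbb Z^2}q^{Ax^2+Bxy+Cy^2}$, and $(A,B,C,q^k)$ is this series with $q\mapsto q^k$. For $m\ge1$, $0\le r<m$: $P_{m,r}\sum_{n\ge0}a(n)q^n=\sum_{n\ge0}a(mn+r)q^{mn+r}$. *)

theory Defs
  imports "HOL-Computational_Algebra.Formal_Power_Series"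
begin

definition qf_theta :: "int \<Rightarrow> int \<Rightarrow> int \<Rightarrow> int fps" where
  "qf_theta A B C = Abs_fps (\<lambda>n. int (card {(x::int, y::int). A*x^2 + B*x*y + C*y^2 = int n}))"

definition P_op :: "nat \<Rightarrow> nat \<Rightarrow> 'a::zero fps \<Rightarrow> 'a fps" where
  "P_op m r f = Abs_fps (\<lambda>n. if n mod m = r then fps_nth f n else 0)"

end

theory Submission
  imports Defs "HOL-Number_Theory.Cong"
begin

text \<open>For n in the residue class r mod 3, every representation of n by the smaller form
  lies in a sublattice of index 3 (the class of a value mod 3 depends only on (x, y) mod 3),
  and an explicit injective linear map of Z^2 onto that sublattice transports the
  larger form to the smaller one.  For the other n the roles flip: the representations of n by
  the larger form lie in a sublattice of index 3 on which it is 9 times the smaller form, which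
  accounts for the term with q replaced by q^9.\<close>

definition theta_series :: "('a \<Rightarrow> int) \<Rightarrow> int fps" where
  "theta_series Q = Abs_fps (\<lambda>n. int (card {v. Q v = int n}))"

definition qf :: "int \<Rightarrow> int \<Rightarrow> int \<Rightarrow> int \<times> int \<Rightarrow> int" where
  "qf A B C = (\<lambda>(x, y). A*x^2 + B*x*y + C*y^2)"

lemma qf_apply [simp]: "qf A B C (x, y) = A*x^2 + B*x*y + C*y^2"
  by (simp add: qf_def)

lemma qf_theta_eq_theta_series: "qf_theta A B C = theta_series (qf A B C)"
  by (simp add: qf_theta_def theta_series_def qf_def case_prod_beta')

lemma fps_nth_compose_X_power:
  fixes F :: "'a::semiring_1 fps"
  assumes "k > 0"
  shows "fps_nth (F oo fps_X ^ k) n = (if k dvd n then fps_nth F (n div k) else 0)"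
proof -
  have "fps_nth (F oo fps_X ^ k) n = (\<Sum>i\<in>{0..n}. fps_nth F i * (if n = k * i then 1 else 0))"
    by (simp add: fps_compose_nth flip: power_mult)
  also have "\<dots> = (\<Sum>i\<in>{0..n} \<inter> {i. n = k * i}. fps_nth F i)"
    by (simp add: sum.inter_restrict if_distrib cong: if_cong)
  also have "{0..n} \<inter> {i. n = k * i} = (if k dvd n then {n div k} else {})"
    using assms by auto
  finally show ?thesis
    by simp
qed

lemma card_level_set_scaled:
  fixes F :: "'a \<Rightarrow> int"
  assumes "k \<noteq> 0"
  shows "card {v. k * F v = c} = (if k dvd c then card {v. F v = c div k} else 0)"
proof (cases "k dvd c")
  case False
  then have "{v. k * F v = c} = {}"
    by auto
  with False show ?thesis
    by simp
qed (use assms in auto)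

lemma card_level_set_pullback:
  assumes "inj f" and "\<And>v. Q (f v) = P v" and "\<And>w. Q w = c \<Longrightarrow> w \<in> range f"
  shows "card {v. P v = c} = card {w. Q w = c}"
proof -
  have "{w. Q w = c} = f ` {v. P v = c}"
    using assms(2,3) by (auto simp flip: assms(2))
  then show ?thesis
    using card_image[OF inj_on_subset[OF assms(1)]] by simp
qed

lemma theta_series_dissection:
  fixes Q F :: "'a \<Rightarrow> int"
  assumes "k > 0" and "m dvd k" and "r \<noteq> 0"
    and on_residue: "\<And>n. n mod m = r \<Longrightarrow> card {v. Q v = int n} = card {w. F w = int n}"
    and off_residue: "\<And>n. n mod m \<noteq> r \<Longrightarrow> card {v. int k * F v = int n} = card {w. Q w = int n}"
  shows "theta_series Q = (theta_series F oo fps_X ^ k) + P_op m r (theta_series F)"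
proof (rule fps_ext)
  fix n
  show "fps_nth (theta_series Q) n = fps_nth ((theta_series F oo fps_X ^ k) + P_op m r (theta_series F)) n"
  proof (cases "n mod m = r")
    case True
    have "\<not> k dvd n"
    proof
      assume "k dvd n"
      with \<open>m dvd k\<close> have "n mod m = 0"
        by (simp add: dvd_trans)
      with True \<open>r \<noteq> 0\<close> show False
        by simp
    qed
    with True on_residue[OF True] \<open>k > 0\<close> show ?thesis
      by (simp add: theta_series_def P_op_def fps_nth_compose_X_power)
  next
    case False
    with off_residue[OF False] \<open>k > 0\<close> show ?thesis
      using card_level_set_scaled[of "int k" F "int n"]
      by (auto simp: theta_series_def P_op_def fps_nth_compose_X_power zdiv_int)
  qed
qed

lemma qf_mod: "qf A B C (x, y) mod m = qf A B C (x mod m, y mod m) mod m"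
proof -
  have "[qf A B C (x, y) = qf A B C (x mod m, y mod m)] (mod m)"
    unfolding qf_apply by (intro cong_add cong_mult cong_pow cong_refl) (simp_all add: cong_def)
  then show ?thesis
    by (simp add: cong_def)
qed

lemma qf_mod3_by_residues:
  assumes "\<And>a b. a \<in> {0, 1, 2} \<Longrightarrow> b \<in> {0, 1, 2} \<Longrightarrow> P (qf A B C (a, b) mod 3) a b"
  shows "P (qf A B C (x, y) mod 3) (x mod 3) (y mod 3)"
proof -
  have "x mod 3 \<in> {0, 1, 2}" "y mod 3 \<in> {0, 1, 2}"
    by auto
  then have "P (qf A B C (x mod 3, y mod 3) mod 3) (x mod 3) (y mod 3)"
    by (rule assms)
  then show ?thesis
    by (simp only: qf_mod[of A B C x y 3])
qed

lemma qf_1_1_6_mod3_eq_1: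
  assumes "qf 1 1 6 (x, y) mod 3 = 1"
  shows "3 dvd y"
proof -
  have "qf 1 1 6 (x, y) mod 3 = 1 \<longrightarrow> y mod 3 = 0"
    by (rule qf_mod3_by_residues[where P="\<lambda>q a b. q = 1 \<longrightarrow> b = 0"]) auto
  with assms show ?thesis
    by (simp add: dvd_eq_mod_eq_0)
qed

lemma qf_1_1_6_mod3_eq_2:
  assumes "qf 1 1 6 (x, y) mod 3 = 2"
  shows "3 dvd (x - y)"
proof -
  have "qf 1 1 6 (x, y) mod 3 = 2 \<longrightarrow> x mod 3 = y mod 3"
    by (rule qf_mod3_by_residues[where P="\<lambda>q a b. q = 2 \<longrightarrow> a = b"]) auto
  with assms show ?thesis
    by (simp add: mod_eq_dvd_iff)
qed

lemma qf_2_1_3_mod3_eq_1: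
  assumes "qf 2 1 3 (x, y) mod 3 = 1"
  shows "3 dvd (x + y)"
proof -
  have "qf 2 1 3 (x, y) mod 3 = 1 \<longrightarrow> (x mod 3 + y mod 3) mod 3 = 0"
    by (rule qf_mod3_by_residues[where P="\<lambda>q a b. q = 1 \<longrightarrow> (a + b) mod 3 = 0"]) auto
  with assms show ?thesis
    by (simp add: dvd_eq_mod_eq_0 mod_add_eq)
qed

lemma qf_2_1_3_mod3_eq_2:
  assumes "qf 2 1 3 (x, y) mod 3 = 2"
  shows "3 dvd y"
proof -
  have "qf 2 1 3 (x, y) mod 3 = 2 \<longrightarrow> y mod 3 = 0"
    by (rule qf_mod3_by_residues[where P="\<lambda>q a b. q = 2 \<longrightarrow> b = 0"]) auto
  with assms show ?thesis
    by (simp add: dvd_eq_mod_eq_0)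
qed

lemma qf_1_1_52_mod3_neq_1:
  assumes "qf 1 1 52 (x, y) mod 3 \<noteq> 1"
  shows "3 dvd (x - y)"
proof -
  have "qf 1 1 52 (x, y) mod 3 \<noteq> 1 \<longrightarrow> x mod 3 = y mod 3"
    by (rule qf_mod3_by_residues[where P="\<lambda>q a b. q \<noteq> 1 \<longrightarrow> a = b"]) auto
  with assms show ?thesis
    by (simp add: mod_eq_dvd_iff)
qed

lemma qf_8_7_8_mod3_neq_2:
  assumes "qf 8 7 8 (x, y) mod 3 \<noteq> 2"
  shows "3 dvd (x + y)"
proof -
  have "qf 8 7 8 (x, y) mod 3 \<noteq> 2 \<longrightarrow> (x mod 3 + y mod 3) mod 3 = 0"
    by (rule qf_mod3_by_residues[where P="\<lambda>q a b. q \<noteq> 2 \<longrightarrow> (a + b) mod 3 = 0"]) auto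
  with assms show ?thesis
    by (simp add: dvd_eq_mod_eq_0 mod_add_eq)
qed

lemma qf_4_1_13_mod3_neq_1:
  assumes "qf 4 1 13 (x, y) mod 3 \<noteq> 1"
  shows "3 dvd (x - y)"
proof -
  have "qf 4 1 13 (x, y) mod 3 \<noteq> 1 \<longrightarrow> x mod 3 = y mod 3"
    by (rule qf_mod3_by_residues[where P="\<lambda>q a b. q \<noteq> 1 \<longrightarrow> a = b"]) auto
  with assms show ?thesis
    by (simp add: mod_eq_dvd_iff)
qed

lemma qf_2_1_26_mod3_neq_2:
  assumes "qf 2 1 26 (x, y) mod 3 \<noteq> 2"
  shows "3 dvd (x + y)"
proof -
  have "qf 2 1 26 (x, y) mod 3 \<noteq> 2 \<longrightarrow> (x mod 3 + y mod 3) mod 3 = 0"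
    by (rule qf_mod3_by_residues[where P="\<lambda>q a b. q \<noteq> 2 \<longrightarrow> (a + b) mod 3 = 0"]) auto
  with assms show ?thesis
    by (simp add: dvd_eq_mod_eq_0 mod_add_eq)
qed

lemma card_qf_1_1_52_eq_qf_1_1_6:
  assumes "n mod 3 = 1"
  shows "card {v. qf 1 1 52 v = int n} = card {w. qf 1 1 6 w = int n}"
proof (rule card_level_set_pullback[where f="\<lambda>(x, y). (x - y, 3 * y)"])
  show "inj ((\<lambda>(x, y). (x - y, 3 * y)) :: int \<times> int \<Rightarrow> _)"
    by (auto simp: inj_def)
  show "qf 1 1 6 ((\<lambda>(x, y). (x - y, 3 * y)) v) = qf 1 1 52 v" for v
    by (cases v) (simp add: power2_eq_square algebra_simps)
  fix w
  assume "qf 1 1 6 w = int n"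
  moreover obtain u v where w: "w = (u, v)"
    by fastforce
  moreover have "int n mod 3 = 1"
    using assms by presburger
  ultimately have "qf 1 1 6 (u, v) mod 3 = 1"
    by simp
  then have "3 dvd v"
    by (rule qf_1_1_6_mod3_eq_1)
  then obtain j where "v = 3 * j"
    by (auto simp: algebra_simps)
  with w show "w \<in> range (\<lambda>(x, y). (x - y, 3 * y))"
    by (auto intro!: image_eqI[where x="(u + j, j)"])
qed

lemma card_scaled_qf_1_1_6_eq_qf_1_1_52:
  assumes "n mod 3 \<noteq> 1"
  shows "card {v. int 9 * qf 1 1 6 v = int n} = card {w. qf 1 1 52 w = int n}"
proof (rule card_level_set_pullback[where f="\<lambda>(x, y). (y + 3 * x, y)"])
  show "inj ((\<lambda>(x, y). (y + 3 * x, y)) :: int \<times> int \<Rightarrow> _)"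
    by (auto simp: inj_def)
  show "qf 1 1 52 ((\<lambda>(x, y). (y + 3 * x, y)) v) = int 9 * qf 1 1 6 v" for v
    by (cases v) (simp add: power2_eq_square algebra_simps)
  fix w
  assume "qf 1 1 52 w = int n"
  moreover obtain u v where w: "w = (u, v)"
    by fastforce
  moreover have "int n mod 3 \<noteq> 1"
    using assms by presburger
  ultimately have "qf 1 1 52 (u, v) mod 3 \<noteq> 1"
    by simp
  then have "3 dvd (u - v)"
    by (rule qf_1_1_52_mod3_neq_1)
  then obtain j where "u = v + 3 * j"
    by (auto simp: algebra_simps)
  with w show "w \<in> range (\<lambda>(x, y). (y + 3 * x, y))"
    by (auto intro!: image_eqI[where x="(j, v)"])
qed

lemma card_qf_8_7_8_eq_qf_1_1_6:
  assumes "n mod 3 = 2"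
  shows "card {v. qf 8 7 8 v = int n} = card {w. qf 1 1 6 w = int n}"
proof (rule card_level_set_pullback[where f="\<lambda>(x, y). (x - 2 * y, x + y)"])
  show "inj ((\<lambda>(x, y). (x - 2 * y, x + y)) :: int \<times> int \<Rightarrow> _)"
    by (auto simp: inj_def)
  show "qf 1 1 6 ((\<lambda>(x, y). (x - 2 * y, x + y)) v) = qf 8 7 8 v" for v
    by (cases v) (simp add: power2_eq_square algebra_simps)
  fix w
  assume "qf 1 1 6 w = int n"
  moreover obtain u v where w: "w = (u, v)"
    by fastforce
  moreover have "int n mod 3 = 2"
    using assms by presburger
  ultimately have "qf 1 1 6 (u, v) mod 3 = 2"
    by simp
  then have "3 dvd (u - v)"
    by (rule qf_1_1_6_mod3_eq_2)
  then obtain j where "u = v + 3 * j"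
    by (auto simp: algebra_simps)
  with w show "w \<in> range (\<lambda>(x, y). (x - 2 * y, x + y))"
    by (auto intro!: image_eqI[where x="(v + j, - j)"])
qed

lemma card_scaled_qf_1_1_6_eq_qf_8_7_8:
  assumes "n mod 3 \<noteq> 2"
  shows "card {v. int 9 * qf 1 1 6 v = int n} = card {w. qf 8 7 8 w = int n}"
proof (rule card_level_set_pullback[where f="\<lambda>(x, y). (y - x, x + 2 * y)"])
  show "inj ((\<lambda>(x, y). (y - x, x + 2 * y)) :: int \<times> int \<Rightarrow> _)"
    by (auto simp: inj_def)
  show "qf 8 7 8 ((\<lambda>(x, y). (y - x, x + 2 * y)) v) = int 9 * qf 1 1 6 v" for v
    by (cases v) (simp add: power2_eq_square algebra_simps)
  fix w
  assume "qf 8 7 8 w = int n"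
  moreover obtain u v where w: "w = (u, v)"
    by fastforce
  moreover have "int n mod 3 \<noteq> 2"
    using assms by presburger
  ultimately have "qf 8 7 8 (u, v) mod 3 \<noteq> 2"
    by simp
  then have "3 dvd (u + v)"
    by (rule qf_8_7_8_mod3_neq_2)
  then obtain j where "u = 3 * j - v"
    by (auto simp: algebra_simps)
  with w show "w \<in> range (\<lambda>(x, y). (y - x, x + 2 * y))"
    by (auto intro!: image_eqI[where x="(v - 2 * j, j)"])
qed

lemma card_qf_4_1_13_eq_qf_2_1_3:
  assumes "n mod 3 = 1"
  shows "card {v. qf 4 1 13 v = int n} = card {w. qf 2 1 3 w = int n}"
proof (rule card_level_set_pullback[where f="\<lambda>(x, y). (- x - 2 * y, x - y)"])
  show "inj ((\<lambda>(x, y). (- x - 2 * y, x - y)) :: int \<times> int \<Rightarrow> _)"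
    by (auto simp: inj_def)
  show "qf 2 1 3 ((\<lambda>(x, y). (- x - 2 * y, x - y)) v) = qf 4 1 13 v" for v
    by (cases v) (simp add: power2_eq_square algebra_simps)
  fix w
  assume "qf 2 1 3 w = int n"
  moreover obtain u v where w: "w = (u, v)"
    by fastforce
  moreover have "int n mod 3 = 1"
    using assms by presburger
  ultimately have "qf 2 1 3 (u, v) mod 3 = 1"
    by simp
  then have "3 dvd (u + v)"
    by (rule qf_2_1_3_mod3_eq_1)
  then obtain j where "u = 3 * j - v"
    by (auto simp: algebra_simps)
  with w show "w \<in> range (\<lambda>(x, y). (- x - 2 * y, x - y))"
    by (auto intro!: image_eqI[where x="(v - j, - j)"])
qed

lemma card_scaled_qf_2_1_3_eq_qf_4_1_13:
  assumes "n mod 3 \<noteq> 1"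
  shows "card {v. int 9 * qf 2 1 3 v = int n} = card {w. qf 4 1 13 w = int n}"
proof (rule card_level_set_pullback[where f="\<lambda>(x, y). (x - 2 * y, x + y)"])
  show "inj ((\<lambda>(x, y). (x - 2 * y, x + y)) :: int \<times> int \<Rightarrow> _)"
    by (auto simp: inj_def)
  show "qf 4 1 13 ((\<lambda>(x, y). (x - 2 * y, x + y)) v) = int 9 * qf 2 1 3 v" for v
    by (cases v) (simp add: power2_eq_square algebra_simps)
  fix w
  assume "qf 4 1 13 w = int n"
  moreover obtain u v where w: "w = (u, v)"
    by fastforce
  moreover have "int n mod 3 \<noteq> 1"
    using assms by presburger
  ultimately have "qf 4 1 13 (u, v) mod 3 \<noteq> 1"
    by simp
  then have "3 dvd (u - v)"
    by (rule qf_4_1_13_mod3_neq_1)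
  then obtain j where "u = v + 3 * j"
    by (auto simp: algebra_simps)
  with w show "w \<in> range (\<lambda>(x, y). (x - 2 * y, x + y))"
    by (auto intro!: image_eqI[where x="(v + j, - j)"])
qed

lemma card_qf_2_1_26_eq_qf_2_1_3:
  assumes "n mod 3 = 2"
  shows "card {v. qf 2 1 26 v = int n} = card {w. qf 2 1 3 w = int n}"
proof (rule card_level_set_pullback[where f="\<lambda>(x, y). (x + y, - 3 * y)"])
  show "inj ((\<lambda>(x, y). (x + y, - 3 * y)) :: int \<times> int \<Rightarrow> _)"
    by (auto simp: inj_def)
  show "qf 2 1 3 ((\<lambda>(x, y). (x + y, - 3 * y)) v) = qf 2 1 26 v" for v
    by (cases v) (simp add: power2_eq_square algebra_simps)
  fix w
  assume "qf 2 1 3 w = int n"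
  moreover obtain u v where w: "w = (u, v)"
    by fastforce
  moreover have "int n mod 3 = 2"
    using assms by presburger
  ultimately have "qf 2 1 3 (u, v) mod 3 = 2"
    by simp
  then have "3 dvd v"
    by (rule qf_2_1_3_mod3_eq_2)
  then obtain j where "v = 3 * j"
    by (auto simp: algebra_simps)
  with w show "w \<in> range (\<lambda>(x, y). (x + y, - 3 * y))"
    by (auto intro!: image_eqI[where x="(u + j, - j)"])
qed

lemma card_scaled_qf_2_1_3_eq_qf_2_1_26:
  assumes "n mod 3 \<noteq> 2"
  shows "card {v. int 9 * qf 2 1 3 v = int n} = card {w. qf 2 1 26 w = int n}"
proof (rule card_level_set_pullback[where f="\<lambda>(x, y). (3 * x + y, - y)"])
  show "inj ((\<lambda>(x, y). (3 * x + y, - y)) :: int \<times> int \<Rightarrow> _)"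
    by (auto simp: inj_def)
  show "qf 2 1 26 ((\<lambda>(x, y). (3 * x + y, - y)) v) = int 9 * qf 2 1 3 v" for v
    by (cases v) (simp add: power2_eq_square algebra_simps)
  fix w
  assume "qf 2 1 26 w = int n"
  moreover obtain u v where w: "w = (u, v)"
    by fastforce
  moreover have "int n mod 3 \<noteq> 2"
    using assms by presburger
  ultimately have "qf 2 1 26 (u, v) mod 3 \<noteq> 2"
    by simp
  then have "3 dvd (u + v)"
    by (rule qf_2_1_26_mod3_neq_2)
  then obtain j where "u = 3 * j - v"
    by (auto simp: algebra_simps)
  with w show "w \<in> range (\<lambda>(x, y). (3 * x + y, - y))"
    by (auto intro!: image_eqI[where x="(j, - v)"])
qed

theorem mainTheorem6:
  shows "(qf_theta 1 1 52 = (qf_theta 1 1 6 oo fps_X ^ 9) + P_op 3 1 (qf_theta 1 1 6)) \<and>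
    (qf_theta 8 7 8 = (qf_theta 1 1 6 oo fps_X ^ 9) + P_op 3 2 (qf_theta 1 1 6)) \<and>
    (qf_theta 4 1 13 = (qf_theta 2 1 3 oo fps_X ^ 9) + P_op 3 1 (qf_theta 2 1 3)) \<and>
    (qf_theta 2 1 26 = (qf_theta 2 1 3 oo fps_X ^ 9) + P_op 3 2 (qf_theta 2 1 3))"
  unfolding qf_theta_eq_theta_series
  by (intro conjI theta_series_dissection
      card_qf_1_1_52_eq_qf_1_1_6 card_scaled_qf_1_1_6_eq_qf_1_1_52
      card_qf_8_7_8_eq_qf_1_1_6 card_scaled_qf_1_1_6_eq_qf_8_7_8
      card_qf_4_1_13_eq_qf_2_1_3 card_scaled_qf_2_1_3_eq_qf_4_1_13
      card_qf_2_1_26_eq_qf_2_1_3 card_scaled_qf_2_1_3_eq_qf_2_1_26) simp_all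

end
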